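(* For every $\ell\in\mathbb N\cup\{\infty\}$ (with $\mathbb N$ the positive integers), there exists an integral domain that is not atomic, is an IDF domain, and contains exactly $\ell$ irreducible elements up to associates.
   Context: For an integral domain $R$, an irreducible (atom) is a nonzero nonunit $a$ such that $a=uv$ implies $u$ or $v$ is a unit. $R$ is atomic if every nonzero nonunit is a finite product of irreducibles. $R$ is an IDF domain if every nonzero element is divisible by only finitely many irreducibles up to associates. *)

theory Defs
  imports "HOL-Algebra.Ring" "HOL-Algebra.Divisibility" "HOL-Library.Extended_Nat"
begin

definition atom :: "('a, 'b) ring_scheme \<Rightarrow> 'a \<Rightarrow> bool" where
  "atom R a \<longleftrightarrow> a \<in> carrier R \<and> a \<noteq> \<zero>\<^bsub>R\<^esub> \<and> a \<notin> Units R \<and>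
     (\<forall>u\<in>carrier R. \<forall>v\<in>carrier R. a = u \<otimes>\<^bsub>R\<^esub> v \<longrightarrow> u \<in> Units R \<or> v \<in> Units R)"

definition atomic_dom :: "('a, 'b) ring_scheme \<Rightarrow> bool" where
  "atomic_dom R \<longleftrightarrow> (\<forall>x\<in>carrier R. x \<noteq> \<zero>\<^bsub>R\<^esub> \<and> x \<notin> Units R \<longrightarrow>
     (\<exists>as. as \<noteq> [] \<and> (\<forall>a\<in>set as. atom R a) \<and> x = foldr (\<lambda>a b. a \<otimes>\<^bsub>R\<^esub> b) as \<one>\<^bsub>R\<^esub>))"

definition assoc_class :: "('a, 'b) ring_scheme \<Rightarrow> 'a \<Rightarrow> 'a set" where
  "assoc_class R a = {b \<in> carrier R. a \<sim>\<^bsub>R\<^esub> b}"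

definition IDF_dom :: "('a, 'b) ring_scheme \<Rightarrow> bool" where
  "IDF_dom R \<longleftrightarrow> (\<forall>x\<in>carrier R. x \<noteq> \<zero>\<^bsub>R\<^esub> \<longrightarrow>
     finite (assoc_class R ` {a. atom R a \<and> a divides\<^bsub>R\<^esub> x}))"

definition atom_classes :: "('a, 'b) ring_scheme \<Rightarrow> 'a set set" where
  "atom_classes R = assoc_class R ` {a. atom R a}"

definition ecard :: "'a set \<Rightarrow> enat" where
  "ecard S = (if finite S then enat (card S) else \<infinity>)"

end

theory Submission
  imports Defs "HOL-Library.Countable" "HOL-Computational_Algebra.Computational_Algebra"
    "HOL-Computational_Algebra.Field_as_Ring"
begin

text \<open>
  Fix a finite nonempty set P of primes and let Z_P be the ring of rationals whose denominators
  are prime to every p in P. A nonzero nonunit of Z_P is divisible by some p in P, so up to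
  associates the atoms of Z_P are exactly the p in P.

  In A = Z_P + X Q[[X]] a power series is a unit iff its constant term is a unit of Z_P. An
  element with constant term 0 is p times a nonunit, hence not an atom, and every other atom is
  associated to a constant p in P. So A has exactly |P| atoms up to associates, which makes it
  trivially IDF, and X is not a product of atoms since all atoms have nonzero constant term.

  For infinitely many atoms take B = Z_P + X Q[X] instead. The polynomials 1 + cX with c /= 0
  are pairwise non-associated atoms. An atom dividing f /= 0 is associated either to some p in P
  or to a divisor of f in Q[X] with constant term 1, and there are only finitely many of the
  latter; so B is IDF, and again X is not a product of atoms.

  The statement asks for a ring whose elements are sets of naturals, so both rings are
  transported along an injective encoding of coefficient sequences into nat set.
\<close>

definition dvd_in :: "'a::idom set \<Rightarrow> 'a \<Rightarrow> 'a \<Rightarrow> bool" where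
  "dvd_in S a b \<longleftrightarrow> (\<exists>c\<in>S. b = a * c)"

definition unit_in :: "'a::idom set \<Rightarrow> 'a \<Rightarrow> bool" where
  "unit_in S u \<longleftrightarrow> u \<in> S \<and> (\<exists>v\<in>S. u * v = 1)"

definition irreducible_in :: "'a::idom set \<Rightarrow> 'a \<Rightarrow> bool" where
  "irreducible_in S a \<longleftrightarrow> a \<in> S \<and> a \<noteq> 0 \<and> \<not> unit_in S a \<and>
     (\<forall>u\<in>S. \<forall>v\<in>S. a = u * v \<longrightarrow> unit_in S u \<or> unit_in S v)"

definition associated_in :: "'a::idom set \<Rightarrow> 'a \<Rightarrow> 'a \<Rightarrow> bool" where
  "associated_in S a b \<longleftrightarrow> dvd_in S a b \<and> dvd_in S b a"

definition assoc_class_in :: "'a::idom set \<Rightarrow> 'a \<Rightarrow> 'a set" where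
  "assoc_class_in S a = {b \<in> S. associated_in S a b}"

lemma dvd_in_imp_dvd: "dvd_in S a b \<Longrightarrow> a dvd b"
  by (auto simp: dvd_in_def)

lemma irreducible_inD:
  "irreducible_in S a \<Longrightarrow> u \<in> S \<Longrightarrow> v \<in> S \<Longrightarrow> a = u * v \<Longrightarrow> unit_in S u \<or> unit_in S v"
  unfolding irreducible_in_def by blast

lemma associated_in_mult_unit:
  assumes "b \<in> S" "unit_in S u"
  shows "associated_in S (b * u) b"
proof -
  obtain v where "u \<in> S" "v \<in> S" "u * v = 1" using assms(2) by (auto simp: unit_in_def)
  then have "b = (b * u) * v" by (simp flip: mult.assoc)
  with \<open>u \<in> S\<close> \<open>v \<in> S\<close> show ?thesis
    unfolding associated_in_def dvd_in_def by blast
qed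

lemma unit_in_field_iff: "unit_in S (u::'a::field) \<longleftrightarrow> u \<in> S \<and> u \<noteq> 0 \<and> inverse u \<in> S"
proof -
  have "u * v = 1 \<longleftrightarrow> u \<noteq> 0 \<and> v = inverse u" for v
    by (metis inverse_unique mult_zero_left right_inverse zero_neq_one)
  then show ?thesis
    by (auto simp: unit_in_def mult.commute)
qed

lemma IDF_dom_if_finite_atom_classes:
  assumes "finite (atom_classes R)"
  shows "IDF_dom R"
  using assms unfolding IDF_dom_def atom_classes_def
  by (auto elim!: finite_subset[rotated])

lemma not_atomic_domI:
  assumes "x \<in> carrier R" "x \<noteq> \<zero>\<^bsub>R\<^esub>" "x \<notin> Units R" "x \<notin> M"
    and "\<one>\<^bsub>R\<^esub> \<in> M" and "\<And>a b. atom R a \<Longrightarrow> b \<in> M \<Longrightarrow> a \<otimes>\<^bsub>R\<^esub> b \<in> M"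
  shows "\<not> atomic_dom R"
proof
  have "foldr (\<lambda>a b. a \<otimes>\<^bsub>R\<^esub> b) as \<one>\<^bsub>R\<^esub> \<in> M" if "\<forall>a\<in>set as. atom R a" for as
    using that assms(5,6) by (induction as) auto
  moreover assume "atomic_dom R"
  ultimately show False
    using assms(1-4) unfolding atomic_dom_def by metis
qed

section \<open>Transporting a subring to sets of naturals\<close>

locale encoded_subring =
  fixes S :: "'a::idom set" and e :: "'a \<Rightarrow> nat set"
  assumes zero_mem: "0 \<in> S" and one_mem: "1 \<in> S"
    and add_mem: "a \<in> S \<Longrightarrow> b \<in> S \<Longrightarrow> a + b \<in> S"
    and mult_mem: "a \<in> S \<Longrightarrow> b \<in> S \<Longrightarrow> a * b \<in> S"
    and uminus_mem: "a \<in> S \<Longrightarrow> - a \<in> S"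
    and inj_e: "inj_on e S"
begin

definition image_ring :: "nat set ring" where
  "image_ring = \<lparr>carrier = e ` S, monoid.mult = (\<lambda>x y. e (inv_into S e x * inv_into S e y)),
     one = e 1, zero = e 0, add = (\<lambda>x y. e (inv_into S e x + inv_into S e y))\<rparr>"

lemma image_ring_simps [simp]:
  "carrier image_ring = e ` S" "\<one>\<^bsub>image_ring\<^esub> = e 1" "\<zero>\<^bsub>image_ring\<^esub> = e 0"
  "a \<in> S \<Longrightarrow> b \<in> S \<Longrightarrow> e a \<otimes>\<^bsub>image_ring\<^esub> e b = e (a * b)"
  "a \<in> S \<Longrightarrow> b \<in> S \<Longrightarrow> e a \<oplus>\<^bsub>image_ring\<^esub> e b = e (a + b)"
  by (simp_all add: image_ring_def inv_into_f_f[OF inj_e])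

lemma e_eq_iff [simp]: "a \<in> S \<Longrightarrow> b \<in> S \<Longrightarrow> e a = e b \<longleftrightarrow> a = b"
  using inj_e by (auto dest: inj_onD)

lemma domain_image_ring: "domain image_ring"
  apply (intro domain.intro cringI abelian_groupI comm_monoidI domain_axioms.intro)
  subgoal by (auto intro!: imageI add_mem)
  subgoal using zero_mem by simp
  subgoal by (auto simp: add_mem add.assoc)
  subgoal by (auto simp: add.commute)
  subgoal by (auto simp: zero_mem)
  subgoal for x
  proof -
    assume "x \<in> carrier image_ring"
    then obtain a where "a \<in> S" "x = e a" by auto
    then show ?thesis
      using uminus_mem by (intro bexI[of _ "e (- a)"]) auto
  qed
  subgoal by (auto simp: mult_mem)
  subgoal by (auto simp: one_mem)
  subgoal by (auto simp: mult_mem mult.assoc)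
  subgoal by (auto simp: one_mem)
  subgoal by (auto simp: mult.commute)
  subgoal by (auto simp: add_mem mult_mem distrib_right)
  subgoal by (auto simp: zero_mem one_mem)
  subgoal for x y
  proof -
    assume "x \<otimes>\<^bsub>image_ring\<^esub> y = \<zero>\<^bsub>image_ring\<^esub>" "x \<in> carrier image_ring" "y \<in> carrier image_ring"
    then obtain a b where "a \<in> S" "b \<in> S" "x = e a" "y = e b" "a * b = 0"
      using zero_mem mult_mem by clarsimp
    then show ?thesis
      using zero_mem by auto
  qed
  done

lemma Units_image_ring_iff: "a \<in> S \<Longrightarrow> e a \<in> Units image_ring \<longleftrightarrow> unit_in S a"
  by (auto simp: Units_def unit_in_def one_mem mult_mem mult.commute)

lemma divides_image_ring_iff:
  "a \<in> S \<Longrightarrow> b \<in> S \<Longrightarrow> e a divides\<^bsub>image_ring\<^esub> e b \<longleftrightarrow> dvd_in S a b"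
  by (auto simp: factor_def dvd_in_def mult_mem)

lemma atom_image_ring_iff: "a \<in> S \<Longrightarrow> atom image_ring (e a) \<longleftrightarrow> irreducible_in S a"
  unfolding atom_def irreducible_in_def
  by (auto simp: Units_image_ring_iff zero_mem mult_mem)

lemma atom_image_ringE:
  assumes "atom image_ring x"
  obtains a where "x = e a" "irreducible_in S a"
  using assms atom_image_ring_iff unfolding atom_def by auto

lemma associated_in_refl: "a \<in> S \<Longrightarrow> associated_in S a a"
  unfolding associated_in_def dvd_in_def using one_mem by force

lemma dvd_in_trans: "dvd_in S a b \<Longrightarrow> dvd_in S b c \<Longrightarrow> dvd_in S a c"
  unfolding dvd_in_def by (metis mult.assoc mult_mem)

lemma assoc_class_in_eq_iff:
  assumes "a \<in> S" "b \<in> S"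
  shows "assoc_class_in S a = assoc_class_in S b \<longleftrightarrow> associated_in S a b"
proof
  assume "assoc_class_in S a = assoc_class_in S b"
  then show "associated_in S a b"
    using assms associated_in_refl by (auto simp: assoc_class_in_def)
next
  assume "associated_in S a b"
  then show "assoc_class_in S a = assoc_class_in S b"
    by (auto simp: assoc_class_in_def associated_in_def intro: dvd_in_trans)
qed

lemma assoc_class_image_ring: "a \<in> S \<Longrightarrow> assoc_class image_ring (e a) = e ` assoc_class_in S a"
  by (auto simp: assoc_class_def assoc_class_in_def associated_def associated_in_def
      divides_image_ring_iff)

lemma atoms_image_ring: "{x. atom image_ring x} = e ` {a. irreducible_in S a}"
  by (auto simp: atom_image_ring_iff irreducible_in_def elim!: atom_image_ringE)

lemma ecard_atom_classes_image_ring: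
  "ecard (atom_classes image_ring) = ecard (assoc_class_in S ` {a. irreducible_in S a})"
proof -
  have "atom_classes image_ring = image e ` assoc_class_in S ` {a. irreducible_in S a}"
    unfolding atom_classes_def atoms_image_ring image_image
    by (intro image_cong) (auto simp: assoc_class_image_ring irreducible_in_def)
  moreover have "inj_on (image e) (assoc_class_in S ` {a. irreducible_in S a})"
    by (rule inj_on_subset[OF inj_on_image_Pow[OF inj_e]]) (auto simp: assoc_class_in_def)
  ultimately show ?thesis
    by (simp add: ecard_def finite_image_iff card_image)
qed

lemma IDF_dom_image_ringI:
  assumes "\<And>x. x \<in> S \<Longrightarrow> x \<noteq> 0 \<Longrightarrow>
    finite (assoc_class_in S ` {a. irreducible_in S a \<and> dvd_in S a x})"
  shows "IDF_dom image_ring"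
  unfolding IDF_dom_def
proof (intro ballI impI)
  fix y assume "y \<in> carrier image_ring" "y \<noteq> \<zero>\<^bsub>image_ring\<^esub>"
  then obtain x where x: "x \<in> S" "x \<noteq> 0" "y = e x" by auto
  have "assoc_class image_ring ` {a. atom image_ring a \<and> a divides\<^bsub>image_ring\<^esub> y} \<subseteq>
     image e ` assoc_class_in S ` {a. irreducible_in S a \<and> dvd_in S a x}"
  proof
    fix C assume "C \<in> assoc_class image_ring ` {a. atom image_ring a \<and> a divides\<^bsub>image_ring\<^esub> y}"
    then obtain z where z: "atom image_ring z" "z divides\<^bsub>image_ring\<^esub> y" "C = assoc_class image_ring z"
      by blast
    obtain a where a: "z = e a" "irreducible_in S a"
      using z(1) by (rule atom_image_ringE)
    then have "a \<in> S" by (simp add: irreducible_in_def)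
    with a x z show "C \<in> image e ` assoc_class_in S ` {a. irreducible_in S a \<and> dvd_in S a x}"
      by (simp add: assoc_class_image_ring divides_image_ring_iff)
  qed
  then show "finite (assoc_class image_ring ` {a. atom image_ring a \<and> a divides\<^bsub>image_ring\<^esub> y})"
    using assms[OF x(1,2)] by (rule finite_subset[OF _ finite_imageI])
qed

lemma not_atomic_dom_image_ringI:
  assumes "Q 1" and "\<And>a b. irreducible_in S a \<Longrightarrow> b \<in> S \<Longrightarrow> Q b \<Longrightarrow> Q (a * b)"
    and x: "x \<in> S" "x \<noteq> 0" "\<not> unit_in S x" "\<not> Q x"
  shows "\<not> atomic_dom image_ring"
proof (rule not_atomic_domI[where x = "e x" and M = "e ` {a \<in> S. Q a}"])
  fix y z assume "atom image_ring y" "z \<in> e ` {a \<in> S. Q a}"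
  then obtain a b where "y = e a" "irreducible_in S a" "z = e b" "b \<in> S" "Q b"
    by (auto elim: atom_image_ringE)
  then show "y \<otimes>\<^bsub>image_ring\<^esub> z \<in> e ` {a \<in> S. Q a}"
    using assms(2) by (simp add: irreducible_in_def mult_mem)
next
  show "e x \<notin> e ` {a \<in> S. Q a}"
    using x(1,4) by (auto simp del: e_eq_iff dest: inj_onD[OF inj_e])
qed (use assms(1) x(1-3) zero_mem one_mem Units_image_ring_iff in simp_all)

end

definition graph_code :: "(nat \<Rightarrow> 'a::countable) \<Rightarrow> nat set" where
  "graph_code f = range (\<lambda>n. prod_encode (n, to_nat (f n)))"

lemma inj_graph_code: "inj graph_code"
proof (rule injI)
  fix f g :: "nat \<Rightarrow> 'a" assume fg: "graph_code f = graph_code g"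
  show "f = g"
  proof
    fix n
    have "prod_encode (n, to_nat (f n)) \<in> graph_code g"
      unfolding fg[symmetric] by (simp add: graph_code_def)
    then show "f n = g n" by (auto simp: graph_code_def)
  qed
qed

lemma eq_if_dvd_coeff_0_eq_1:
  fixes f g :: "'a::idom poly"
  assumes "f dvd g" "g \<noteq> 0" "degree g \<le> degree f" "coeff f 0 = 1" "coeff g 0 = 1"
  shows "f = g"
proof -
  obtain w where w: "g = f * w" using assms(1) by (rule dvdE)
  with assms(2) have "f \<noteq> 0" "w \<noteq> 0" by auto
  then have "degree w = 0"
    using w assms(3) degree_mult_eq[of f w] by simp
  then have "w = [:coeff w 0:]" by (rule degree_0_id[symmetric])
  moreover have "coeff w 0 = 1"
    using arg_cong[OF w, of "\<lambda>h. coeff h 0"] assms(4,5) by (simp add: coeff_mult_0)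
  ultimately show ?thesis
    using w by (simp add: one_pCons)
qed

lemma finite_sub_multisets: "finite {M. M \<subseteq># N}"
proof (rule finite_subset)
  show "{M. M \<subseteq># N} \<subseteq> (\<Union>n\<le>size N. multisets_of_size (set_mset N) n)"
    by (auto simp: multisets_of_size_def dest: set_mset_mono size_mset_mono)
qed auto

lemma finite_normalized_divisors:
  fixes x :: "'a::factorial_semiring"
  assumes "x \<noteq> 0"
  shows "finite {d. d dvd x \<and> normalize d = d}"
proof (rule finite_subset)
  show "{d. d dvd x \<and> normalize d = d} \<subseteq>
      (\<lambda>M. normalize (prod_mset M)) ` {M. M \<subseteq># prime_factorization x}"
  proof
    fix d assume d: "d \<in> {d. d dvd x \<and> normalize d = d}"
    then have "d \<noteq> 0" using assms by auto
    then have "d = normalize (prod_mset (prime_factorization d))"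
      using d by (simp add: prod_mset_prime_factorization_weak)
    moreover have "prime_factorization d \<subseteq># prime_factorization x"
      using d \<open>d \<noteq> 0\<close> assms by (simp add: prime_factorization_subset_iff_dvd)
    ultimately show "d \<in> (\<lambda>M. normalize (prod_mset M)) ` {M. M \<subseteq># prime_factorization x}"
      by blast
  qed
qed (simp add: finite_sub_multisets)

lemma finite_dvd_coeff_0_eq_1:
  fixes x :: "'a::field_gcd poly"
  assumes "x \<noteq> 0"
  shows "finite {g. coeff g 0 = 1 \<and> g dvd x}"
proof (rule finite_subset)
  show "{g. coeff g 0 = 1 \<and> g dvd x} \<subseteq>
      (\<lambda>h. smult (inverse (coeff h 0)) h) ` {d. d dvd x \<and> normalize d = d}"
  proof
    fix g assume g: "g \<in> {g. coeff g 0 = 1 \<and> g dvd x}"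
    then have "g \<noteq> 0" by auto
    then have "unit_factor (lead_coeff g) \<noteq> 0" by simp
    with g have "g = smult (inverse (coeff (normalize g) 0)) (normalize g)"
      by (intro poly_eqI) simp
    moreover have "normalize g dvd x" "normalize (normalize g) = normalize g"
      using g by simp_all
    ultimately show "g \<in> (\<lambda>h. smult (inverse (coeff h 0)) h) ` {d. d dvd x \<and> normalize d = d}"
      by blast
  qed
qed (use finite_normalized_divisors[OF assms] in blast)

section \<open>The integers localized at a set of primes\<close>

definition Ints_loc :: "int set \<Rightarrow> rat set" where
  "Ints_loc P = {q. \<exists>b. b \<noteq> 0 \<and> (\<forall>p\<in>P. \<not> p dvd b) \<and> of_int b * q \<in> \<int>}"

lemma Ints_locI:
  assumes "b \<noteq> 0" "\<forall>p\<in>P. \<not> p dvd b" "of_int b * q = of_int m"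
  shows "q \<in> Ints_loc P"
  using assms unfolding Ints_loc_def by (auto intro!: exI[of _ b])

lemma Ints_locE:
  assumes "q \<in> Ints_loc P"
  obtains b m where "b \<noteq> 0" "\<forall>p\<in>P. \<not> p dvd b" "of_int b * q = of_int m"
proof -
  obtain b where "b \<noteq> 0" "\<forall>p\<in>P. \<not> p dvd b" "of_int b * q \<in> \<int>"
    using assms by (auto simp: Ints_loc_def)
  then show thesis
    by (auto elim!: Ints_cases intro: that)
qed

locale prime_set =
  fixes P :: "int set"
  assumes prime_mem: "p \<in> P \<Longrightarrow> prime p"
begin

lemma not_dvd_mult: "\<forall>p\<in>P. \<not> p dvd a \<Longrightarrow> \<forall>p\<in>P. \<not> p dvd b \<Longrightarrow> \<forall>p\<in>P. \<not> p dvd a * b"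
  using prime_mem by (simp add: prime_dvd_mult_iff)

lemma of_int_mem_Ints_loc [simp]: "of_int n \<in> Ints_loc P"
proof (rule Ints_locI)
  show "\<forall>p\<in>P. \<not> p dvd 1" using prime_mem not_prime_unit by blast
qed simp_all

lemma zero_mem_Ints_loc [simp]: "0 \<in> Ints_loc P"
  and one_mem_Ints_loc [simp]: "1 \<in> Ints_loc P"
  using of_int_mem_Ints_loc[of 0] of_int_mem_Ints_loc[of 1] by simp_all

lemma Ints_loc_mult:
  assumes "x \<in> Ints_loc P" "y \<in> Ints_loc P"
  shows "x * y \<in> Ints_loc P"
proof -
  obtain b m where b: "b \<noteq> 0" "\<forall>p\<in>P. \<not> p dvd b" "of_int b * x = of_int m"
    using assms(1) by (rule Ints_locE)
  obtain c n where c: "c \<noteq> 0" "\<forall>p\<in>P. \<not> p dvd c" "of_int c * y = of_int n"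
    using assms(2) by (rule Ints_locE)
  have "of_int (b * c) * (x * y) = (of_int (m * n) :: rat)"
    by (simp flip: b(3) c(3) add: algebra_simps)
  with b c show ?thesis
    by (intro Ints_locI[where b = "b * c" and m = "m * n"] not_dvd_mult) auto
qed

lemma Ints_loc_add:
  assumes "x \<in> Ints_loc P" "y \<in> Ints_loc P"
  shows "x + y \<in> Ints_loc P"
proof -
  obtain b m where b: "b \<noteq> 0" "\<forall>p\<in>P. \<not> p dvd b" "of_int b * x = of_int m"
    using assms(1) by (rule Ints_locE)
  obtain c n where c: "c \<noteq> 0" "\<forall>p\<in>P. \<not> p dvd c" "of_int c * y = of_int n"
    using assms(2) by (rule Ints_locE)
  have "of_int (b * c) * (x + y) = (of_int (c * m + b * n) :: rat)"
    by (simp flip: b(3) c(3) add: algebra_simps)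
  with b c show ?thesis
    by (intro Ints_locI[where b = "b * c" and m = "c * m + b * n"] not_dvd_mult) auto
qed

lemma Ints_loc_uminus: "x \<in> Ints_loc P \<Longrightarrow> - x \<in> Ints_loc P"
  using Ints_loc_mult[OF of_int_mem_Ints_loc[of "-1"]] by simp

lemma frac_not_mem_Ints_loc:
  assumes "p \<in> P" "\<not> p dvd k"
  shows "of_int k / of_int p \<notin> Ints_loc P"
proof
  assume "of_int k / of_int p \<in> Ints_loc P"
  then obtain b m where b: "b \<noteq> 0" "\<forall>p\<in>P. \<not> p dvd b" and "of_int b * (of_int k / of_int p) = (of_int m :: rat)"
    by (rule Ints_locE)
  moreover have "p \<noteq> 0" using prime_mem[OF assms(1)] by auto
  ultimately have "b * k = p * m" by (simp add: field_simps flip: of_int_mult of_int_eq_iff)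
  then show False
    using assms b prime_mem by (metis dvd_triv_left prime_dvd_mult_iff)
qed

lemma Ints_loc_nonunitE:
  assumes "c \<in> Ints_loc P" "c \<noteq> 0" "\<not> unit_in (Ints_loc P) c"
  obtains p where "p \<in> P" "c / of_int p \<in> Ints_loc P"
proof -
  obtain b m where b: "b \<noteq> 0" "\<forall>p\<in>P. \<not> p dvd b" "of_int b * c = of_int m"
    using assms(1) by (rule Ints_locE)
  have "\<exists>p\<in>P. p dvd m"
  proof (rule ccontr)
    assume "\<not> (\<exists>p\<in>P. p dvd m)"
    moreover have "m \<noteq> 0" using b assms(2) by auto
    moreover have "of_int m * inverse c = (of_int b :: rat)"
      using b(3) assms(2) by (simp flip: b(3))
    ultimately have "inverse c \<in> Ints_loc P"
      by (intro Ints_locI[where b = m and m = b]) auto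
    then show False
      using assms by (simp add: unit_in_field_iff)
  qed
  then obtain p k where p: "p \<in> P" and "m = p * k" by (meson dvdE)
  moreover have "of_int p \<noteq> (0::rat)"
    using prime_mem[OF p] by auto
  ultimately have "of_int b * (c / of_int p) = (of_int k :: rat)"
    using b(3) by (simp add: field_simps)
  with b p show thesis
    by (intro that[of p] Ints_locI[where b = b and m = k]) auto
qed

lemma of_int_irreducible_in_Ints_loc:
  assumes p: "p \<in> P"
  shows "irreducible_in (Ints_loc P) (of_int p)"
  unfolding irreducible_in_def
proof (intro conjI ballI impI)
  have p0: "(of_int p :: rat) \<noteq> 0" using prime_mem[OF p] by auto
  then show "of_int p \<noteq> (0::rat)" .
  show "of_int p \<in> Ints_loc P" by simp
  have "\<not> p dvd 1" using prime_mem[OF p] not_prime_unit by blast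
  then show "\<not> unit_in (Ints_loc P) (of_int p)"
    using frac_not_mem_Ints_loc[OF p, of 1] by (simp add: unit_in_field_iff inverse_eq_divide)
  fix u v assume uv: "u \<in> Ints_loc P" "v \<in> Ints_loc P" "of_int p = u * v"
  show "unit_in (Ints_loc P) u \<or> unit_in (Ints_loc P) v"
  proof (rule disjCI)
    assume v: "\<not> unit_in (Ints_loc P) v"
    have "v \<noteq> 0" using uv(3) p0 by auto
    then obtain q where q: "q \<in> P" "v / of_int q \<in> Ints_loc P"
      using Ints_loc_nonunitE[OF uv(2) _ v] by blast
    have "of_int p / of_int q = u * (v / of_int q)"
      by (simp add: uv(3))
    also have "\<dots> \<in> Ints_loc P"
      using uv(1) q(2) by (rule Ints_loc_mult)
    finally have "q = p"
      using frac_not_mem_Ints_loc[OF q(1)] prime_mem p q(1) primes_dvd_imp_eq by blast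
    then have "u * (v / of_int p) = 1"
      using uv(3) p0 by (simp add: field_simps)
    then show "unit_in (Ints_loc P) u"
      using uv(1) q(2) \<open>q = p\<close> unfolding unit_in_def by blast
  qed
qed

end

section \<open>Finitely many atoms: power series\<close>

definition Ints_loc_fps :: "int set \<Rightarrow> rat fps set" where
  "Ints_loc_fps P = {f. f $ 0 \<in> Ints_loc P}"

context prime_set
begin

lemma encoded_subring_Ints_loc_fps: "encoded_subring (Ints_loc_fps P) (\<lambda>f. graph_code (fps_nth f))"
proof
  show "0 \<in> Ints_loc_fps P" "1 \<in> Ints_loc_fps P"
    by (simp_all add: Ints_loc_fps_def)
  show "a + b \<in> Ints_loc_fps P" "a * b \<in> Ints_loc_fps P" if "a \<in> Ints_loc_fps P" "b \<in> Ints_loc_fps P" for a b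
    using that Ints_loc_add Ints_loc_mult by (simp_all add: Ints_loc_fps_def)
  show "- a \<in> Ints_loc_fps P" if "a \<in> Ints_loc_fps P" for a
    using that Ints_loc_uminus by (simp add: Ints_loc_fps_def)
  show "inj_on (\<lambda>f. graph_code (fps_nth f)) (Ints_loc_fps P)"
    using inj_graph_code by (auto intro!: inj_onI fps_ext dest: injD)
qed

lemma unit_in_Ints_loc_fps_iff:
  assumes "f \<in> Ints_loc_fps P"
  shows "unit_in (Ints_loc_fps P) f \<longleftrightarrow> unit_in (Ints_loc P) (f $ 0)"
proof
  assume "unit_in (Ints_loc_fps P) f"
  then obtain g where g: "g \<in> Ints_loc_fps P" "f * g = 1" by (auto simp: unit_in_def)
  then have "f $ 0 * g $ 0 = 1" by (metis fps_mult_nth_0 fps_one_nth)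
  with assms g(1) show "unit_in (Ints_loc P) (f $ 0)"
    by (auto simp: unit_in_def Ints_loc_fps_def)
next
  assume "unit_in (Ints_loc P) (f $ 0)"
  then have "f $ 0 \<noteq> 0" "inverse (f $ 0) \<in> Ints_loc P"
    by (simp_all add: unit_in_field_iff)
  then have "inverse f \<in> Ints_loc_fps P" "f * inverse f = 1"
    by (simp_all add: Ints_loc_fps_def inverse_mult_eq_1')
  with assms show "unit_in (Ints_loc_fps P) f"
    by (auto simp: unit_in_def)
qed

lemma fps_const_irreducible_in_Ints_loc_fps:
  assumes p: "p \<in> P"
  shows "irreducible_in (Ints_loc_fps P) (fps_const (of_int p))"
proof -
  have irr: "irreducible_in (Ints_loc P) (of_int p)"
    using p by (rule of_int_irreducible_in_Ints_loc)
  have mem: "fps_const (of_int p) \<in> Ints_loc_fps P"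
    by (simp add: Ints_loc_fps_def)
  have "unit_in (Ints_loc_fps P) u \<or> unit_in (Ints_loc_fps P) v"
    if "u \<in> Ints_loc_fps P" "v \<in> Ints_loc_fps P" "fps_const (of_int p) = u * v" for u v
  proof -
    have "of_int p = u $ 0 * v $ 0"
      using arg_cong[OF that(3), of "\<lambda>f. f $ 0"] by simp
    then have "unit_in (Ints_loc P) (u $ 0) \<or> unit_in (Ints_loc P) (v $ 0)"
      using irr that(1,2) by (simp add: irreducible_in_def Ints_loc_fps_def)
    then show ?thesis
      using that(1,2) by (simp add: unit_in_Ints_loc_fps_iff)
  qed
  with irr mem show ?thesis
    by (auto simp: irreducible_in_def unit_in_Ints_loc_fps_iff)
qed

lemma irreducible_in_Ints_loc_fps_nth_0:
  assumes "P \<noteq> {}" "irreducible_in (Ints_loc_fps P) a"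
  shows "a $ 0 \<noteq> 0"
proof
  assume a0: "a $ 0 = 0"
  obtain p where p: "p \<in> P" using assms(1) by blast
  then have p0: "(of_int p :: rat) \<noteq> 0" using prime_mem[OF p] by auto
  define w where "w = fps_const (inverse (of_int p)) * a"
  have a_eq: "a = fps_const (of_int p) * w"
    using p0 by (simp add: w_def flip: mult.assoc fps_const_mult)
  have w0: "w $ 0 = 0" using a0 by (simp add: w_def)
  then have wA: "w \<in> Ints_loc_fps P"
    by (simp add: Ints_loc_fps_def)
  have "\<not> unit_in (Ints_loc_fps P) w"
    using w0 by (simp add: unit_in_Ints_loc_fps_iff[OF wA] unit_in_field_iff)
  moreover have "fps_const (of_int p) \<in> Ints_loc_fps P"
    "\<not> unit_in (Ints_loc_fps P) (fps_const (of_int p))"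
    using fps_const_irreducible_in_Ints_loc_fps[OF p] by (simp_all add: irreducible_in_def)
  ultimately show False
    using irreducible_inD[OF assms(2) _ wA a_eq] by blast
qed

lemma irreducible_in_Ints_loc_fps_associated:
  assumes "P \<noteq> {}" "irreducible_in (Ints_loc_fps P) a"
  obtains p where "p \<in> P" "associated_in (Ints_loc_fps P) a (fps_const (of_int p))"
proof -
  have aA: "a \<in> Ints_loc_fps P" and a0: "a $ 0 \<noteq> 0"
    using assms irreducible_in_Ints_loc_fps_nth_0 by (auto simp: irreducible_in_def)
  have "\<not> unit_in (Ints_loc P) (a $ 0)"
    using assms(2) unit_in_Ints_loc_fps_iff[OF aA] by (simp add: irreducible_in_def)
  then obtain p where p: "p \<in> P" "a $ 0 / of_int p \<in> Ints_loc P"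
    using Ints_loc_nonunitE[of "a $ 0"] aA a0 by (auto simp: Ints_loc_fps_def)
  then have p0: "(of_int p :: rat) \<noteq> 0" using prime_mem[OF p(1)] by auto
  define w where "w = fps_const (inverse (of_int p)) * a"
  have wA: "w \<in> Ints_loc_fps P"
    using p(2) by (simp add: w_def Ints_loc_fps_def divide_inverse mult.commute)
  have a_eq: "a = fps_const (of_int p) * w"
    using p0 by (simp add: w_def flip: mult.assoc fps_const_mult)
  have pA: "fps_const (of_int p) \<in> Ints_loc_fps P"
    "\<not> unit_in (Ints_loc_fps P) (fps_const (of_int p))"
    using fps_const_irreducible_in_Ints_loc_fps[OF p(1)] by (simp_all add: irreducible_in_def)
  then have "unit_in (Ints_loc_fps P) w"
    using irreducible_inD[OF assms(2) _ wA a_eq] by blast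
  with pA(1) have "associated_in (Ints_loc_fps P) a (fps_const (of_int p))"
    unfolding a_eq by (rule associated_in_mult_unit)
  with p(1) show thesis by (rule that)
qed

lemma associated_in_Ints_loc_fps_const_imp_eq:
  assumes "p \<in> P" "q \<in> P"
    and "associated_in (Ints_loc_fps P) (fps_const (of_int p)) (fps_const (of_int q))"
  shows "p = q"
proof (rule ccontr)
  assume "p \<noteq> q"
  then have "\<not> p dvd q"
    using assms(1,2) prime_mem primes_dvd_imp_eq by blast
  from assms(3) obtain c where c: "c \<in> Ints_loc_fps P" "fps_const (of_int q) = fps_const (of_int p) * c"
    by (auto simp: associated_in_def dvd_in_def)
  have "of_int q = of_int p * c $ 0"
    using arg_cong[OF c(2), of "\<lambda>f. f $ 0"] by simp
  moreover have "(of_int p :: rat) \<noteq> 0" using prime_mem[OF assms(1)] by auto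
  ultimately have "c $ 0 = of_int q / of_int p" by (simp add: field_simps)
  then show False
    using c(1) frac_not_mem_Ints_loc[OF assms(1) \<open>\<not> p dvd q\<close>] by (simp add: Ints_loc_fps_def)
qed

lemma ecard_irreducible_classes_Ints_loc_fps:
  assumes "finite P" "P \<noteq> {}"
  shows "ecard (assoc_class_in (Ints_loc_fps P) ` {a. irreducible_in (Ints_loc_fps P) a}) =
    enat (card P)"
proof -
  let ?A = "Ints_loc_fps P"
  interpret encoded_subring ?A "\<lambda>f. graph_code (fps_nth f)"
    by (rule encoded_subring_Ints_loc_fps)
  have "assoc_class_in ?A ` {a. irreducible_in ?A a} = (\<lambda>p. assoc_class_in ?A (fps_const (of_int p))) ` P"
  proof (intro equalityI subsetI)
    fix C assume "C \<in> assoc_class_in ?A ` {a. irreducible_in ?A a}"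
    then obtain a where a: "irreducible_in ?A a" "C = assoc_class_in ?A a" by blast
    obtain p where p: "p \<in> P" "associated_in ?A a (fps_const (of_int p))"
      using assms(2) a(1) by (rule irreducible_in_Ints_loc_fps_associated)
    have "a \<in> ?A" "fps_const (of_int p) \<in> ?A"
      using a(1) fps_const_irreducible_in_Ints_loc_fps[OF p(1)] by (simp_all add: irreducible_in_def)
    then have "C = assoc_class_in ?A (fps_const (of_int p))"
      using a(2) p(2) by (simp add: assoc_class_in_eq_iff)
    with p(1) show "C \<in> (\<lambda>p. assoc_class_in ?A (fps_const (of_int p))) ` P"
      by blast
  qed (use fps_const_irreducible_in_Ints_loc_fps in blast)
  moreover have "inj_on (\<lambda>p. assoc_class_in ?A (fps_const (of_int p))) P"
    by (rule inj_onI) (use assoc_class_in_eq_iff fps_const_irreducible_in_Ints_loc_fps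
        associated_in_Ints_loc_fps_const_imp_eq in \<open>auto simp: irreducible_in_def\<close>)
  ultimately show ?thesis
    using assms(1) by (simp add: ecard_def card_image)
qed

lemma exists_nonatomic_IDF_domain_with_card_atom_classes:
  assumes "finite P" "P \<noteq> {}"
  shows "\<exists>R :: nat set ring. domain R \<and> \<not> atomic_dom R \<and> IDF_dom R \<and>
    ecard (atom_classes R) = enat (card P)"
proof -
  let ?A = "Ints_loc_fps P"
  interpret encoded_subring ?A "\<lambda>f. graph_code (fps_nth f)"
    by (rule encoded_subring_Ints_loc_fps)
  have card: "ecard (atom_classes image_ring) = enat (card P)"
    using ecard_irreducible_classes_Ints_loc_fps[OF assms] by (simp add: ecard_atom_classes_image_ring)
  have "\<not> atomic_dom image_ring"
  proof (rule not_atomic_dom_image_ringI[where Q = "\<lambda>f. f $ 0 \<noteq> 0" and x = fps_X])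
    show "fps_X \<in> ?A" "\<not> unit_in ?A fps_X"
      using unit_in_Ints_loc_fps_iff[of fps_X]
      by (simp_all add: Ints_loc_fps_def unit_in_field_iff)
  qed (use irreducible_in_Ints_loc_fps_nth_0[OF assms(2)] in auto)
  moreover have "IDF_dom image_ring"
    using card by (intro IDF_dom_if_finite_atom_classes) (simp add: ecard_def split: if_splits)
  ultimately show ?thesis
    using domain_image_ring card by blast
qed

end

section \<open>Infinitely many atoms: polynomials\<close>

definition Ints_loc_poly :: "int set \<Rightarrow> rat poly set" where
  "Ints_loc_poly P = {f. coeff f 0 \<in> Ints_loc P}"

context prime_set
begin

lemma encoded_subring_Ints_loc_poly: "encoded_subring (Ints_loc_poly P) (\<lambda>f. graph_code (coeff f))"
proof
  show "0 \<in> Ints_loc_poly P" "1 \<in> Ints_loc_poly P"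
    by (simp_all add: Ints_loc_poly_def)
  show "a + b \<in> Ints_loc_poly P" "a * b \<in> Ints_loc_poly P" if "a \<in> Ints_loc_poly P" "b \<in> Ints_loc_poly P" for a b
    using that Ints_loc_add Ints_loc_mult by (simp_all add: Ints_loc_poly_def coeff_mult_0)
  show "- a \<in> Ints_loc_poly P" if "a \<in> Ints_loc_poly P" for a
    using that Ints_loc_uminus by (simp add: Ints_loc_poly_def)
  show "inj_on (\<lambda>f. graph_code (coeff f)) (Ints_loc_poly P)"
    using inj_graph_code by (auto intro!: inj_onI poly_eqI dest: injD)
qed

lemma unit_in_Ints_loc_poly_iff:
  "unit_in (Ints_loc_poly P) f \<longleftrightarrow>
     f \<in> Ints_loc_poly P \<and> degree f = 0 \<and> unit_in (Ints_loc P) (coeff f 0)"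
proof
  assume "unit_in (Ints_loc_poly P) f"
  then obtain g where g: "f \<in> Ints_loc_poly P" "g \<in> Ints_loc_poly P" "f * g = 1"
    by (auto simp: unit_in_def)
  then have "f \<noteq> 0" "g \<noteq> 0" by auto
  then have "degree f = 0"
    using g(3) degree_mult_eq[of f g] by simp
  moreover have "coeff f 0 * coeff g 0 = 1"
    using arg_cong[OF g(3), of "\<lambda>h. coeff h 0"] by (simp add: coeff_mult_0)
  ultimately show "f \<in> Ints_loc_poly P \<and> degree f = 0 \<and> unit_in (Ints_loc P) (coeff f 0)"
    using g(1,2) by (auto simp: unit_in_def Ints_loc_poly_def)
next
  assume f: "f \<in> Ints_loc_poly P \<and> degree f = 0 \<and> unit_in (Ints_loc P) (coeff f 0)"
  then obtain c where c: "c \<in> Ints_loc P" "coeff f 0 * c = 1"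
    by (auto simp: unit_in_def)
  obtain d where "f = [:d:]"
    using f degree_0_id by metis
  with c(2) have "f * [:c:] = 1"
    by (simp add: one_pCons mult.commute)
  moreover have "[:c:] \<in> Ints_loc_poly P"
    using c(1) by (simp add: Ints_loc_poly_def)
  ultimately show "unit_in (Ints_loc_poly P) f"
    using f unfolding unit_in_def by blast
qed

lemma const_not_unit_in_Ints_loc_poly:
  "p \<in> P \<Longrightarrow> \<not> unit_in (Ints_loc_poly P) [:of_int p:]"
  using of_int_irreducible_in_Ints_loc by (simp add: unit_in_Ints_loc_poly_iff irreducible_in_def)

lemma irreducible_in_Ints_loc_poly_coeff_0:
  assumes "P \<noteq> {}" "irreducible_in (Ints_loc_poly P) a"
  shows "coeff a 0 \<noteq> 0"
proof
  assume a0: "coeff a 0 = 0"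
  obtain p where p: "p \<in> P" using assms(1) by blast
  then have p0: "(of_int p :: rat) \<noteq> 0" using prime_mem[OF p] by auto
  define w where "w = smult (inverse (of_int p)) a"
  have a_eq: "a = [:of_int p:] * w"
    using p0 by (simp add: w_def)
  have w0: "coeff w 0 = 0" using a0 by (simp add: w_def)
  then have wB: "w \<in> Ints_loc_poly P"
    by (simp add: Ints_loc_poly_def)
  have "\<not> unit_in (Ints_loc_poly P) w"
    using w0 by (simp add: unit_in_Ints_loc_poly_iff unit_in_field_iff)
  moreover have "[:of_int p:] \<in> Ints_loc_poly P"
    by (simp add: Ints_loc_poly_def)
  ultimately show False
    using irreducible_inD[OF assms(2) _ wB a_eq] const_not_unit_in_Ints_loc_poly[OF p] by blast
qed

lemma linear_irreducible_in_Ints_loc_poly: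
  assumes "c \<noteq> 0"
  shows "irreducible_in (Ints_loc_poly P) [:1, c:]"
  unfolding irreducible_in_def
proof (intro conjI ballI impI)
  show "[:1, c:] \<in> Ints_loc_poly P"
    by (simp add: Ints_loc_poly_def)
  show "[:1, c:] \<noteq> 0" by simp
  show "\<not> unit_in (Ints_loc_poly P) [:1, c:]"
    using assms by (simp add: unit_in_Ints_loc_poly_iff)
  fix u v assume uv: "u \<in> Ints_loc_poly P" "v \<in> Ints_loc_poly P" "[:1, c:] = u * v"
  then have "u \<noteq> 0" "v \<noteq> 0" by auto
  moreover have "degree (u * v) = 1"
    using assms by (simp flip: uv(3))
  ultimately have deg: "degree u = 0 \<or> degree v = 0"
    using degree_mult_eq[of u v] by linarith
  have c: "coeff u 0 * coeff v 0 = 1"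
    using arg_cong[OF uv(3), of "\<lambda>h. coeff h 0"] by (simp add: coeff_mult_0)
  have "unit_in (Ints_loc P) (coeff u 0)"
    using uv(1,2) c by (auto simp: unit_in_def Ints_loc_poly_def)
  moreover have "unit_in (Ints_loc P) (coeff v 0)"
    using uv(1,2) c by (auto simp: unit_in_def Ints_loc_poly_def mult.commute)
  ultimately show "unit_in (Ints_loc_poly P) u \<or> unit_in (Ints_loc_poly P) v"
    using uv(1,2) deg by (auto simp: unit_in_Ints_loc_poly_iff)
qed

lemma irreducible_in_Ints_loc_poly_associated:
  assumes "P \<noteq> {}" "irreducible_in (Ints_loc_poly P) a"
  shows "(\<exists>p\<in>P. associated_in (Ints_loc_poly P) a [:of_int p:]) \<or>
    (\<exists>g. coeff g 0 = 1 \<and> associated_in (Ints_loc_poly P) a g)"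
proof -
  let ?B = "Ints_loc_poly P"
  have aB: "a \<in> ?B" and a0: "coeff a 0 \<noteq> 0"
    using assms irreducible_in_Ints_loc_poly_coeff_0 by (auto simp: irreducible_in_def)
  show ?thesis
  proof (cases "unit_in (Ints_loc P) (coeff a 0)")
    case True
    define c where "c = coeff a 0"
    define g where "g = smult (inverse c) a"
    have g1: "coeff g 0 = 1" using a0 by (simp add: g_def c_def)
    then have gB: "g \<in> ?B"
      by (simp add: Ints_loc_poly_def)
    have "unit_in ?B [:c:]"
      using True aB unfolding unit_in_Ints_loc_poly_iff by (simp add: Ints_loc_poly_def c_def)
    with gB have "associated_in ?B (g * [:c:]) g"
      by (rule associated_in_mult_unit)
    moreover have "g * [:c:] = a"
      using a0 by (simp add: g_def c_def)
    ultimately show ?thesis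
      using g1 by auto
  next
    case False
    then obtain p where p: "p \<in> P" "coeff a 0 / of_int p \<in> Ints_loc P"
      using Ints_loc_nonunitE[of "coeff a 0"] aB a0 by (auto simp: Ints_loc_poly_def)
    then have p0: "(of_int p :: rat) \<noteq> 0" using prime_mem[OF p(1)] by auto
    define w where "w = smult (inverse (of_int p)) a"
    have wB: "w \<in> ?B"
      using p(2) by (simp add: w_def Ints_loc_poly_def divide_inverse mult.commute)
    have a_eq: "a = [:of_int p:] * w"
      using p0 by (simp add: w_def)
    have pB: "[:of_int p:] \<in> ?B"
      by (simp add: Ints_loc_poly_def)
    then have "unit_in ?B w"
      using irreducible_inD[OF assms(2) _ wB a_eq] const_not_unit_in_Ints_loc_poly[OF p(1)] by blast
    with pB have "associated_in ?B a [:of_int p:]"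
      unfolding a_eq by (rule associated_in_mult_unit)
    with p(1) show ?thesis by blast
  qed
qed

lemma finite_irreducible_divisor_classes_Ints_loc_poly:
  assumes "finite P" "P \<noteq> {}" "x \<noteq> 0"
  shows "finite (assoc_class_in (Ints_loc_poly P) `
    {a. irreducible_in (Ints_loc_poly P) a \<and> dvd_in (Ints_loc_poly P) a x})"
proof -
  let ?B = "Ints_loc_poly P"
  interpret encoded_subring ?B "\<lambda>f. graph_code (coeff f)"
    by (rule encoded_subring_Ints_loc_poly)
  have "assoc_class_in ?B ` {a. irreducible_in ?B a \<and> dvd_in ?B a x} \<subseteq>
    (\<lambda>p. assoc_class_in ?B [:of_int p:]) ` P \<union> assoc_class_in ?B ` {g. coeff g 0 = 1 \<and> g dvd x}"
  proof
    fix C assume "C \<in> assoc_class_in ?B ` {a. irreducible_in ?B a \<and> dvd_in ?B a x}"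
    then obtain a where a: "irreducible_in ?B a" "dvd_in ?B a x" "C = assoc_class_in ?B a"
      by blast
    have aB: "a \<in> ?B" using a(1) by (simp add: irreducible_in_def)
    from irreducible_in_Ints_loc_poly_associated[OF assms(2) a(1)]
    show "C \<in> (\<lambda>p. assoc_class_in ?B [:of_int p:]) ` P \<union>
        assoc_class_in ?B ` {g. coeff g 0 = 1 \<and> g dvd x}"
    proof (elim disjE bexE exE conjE)
      fix p assume "p \<in> P" "associated_in ?B a [:of_int p:]"
      moreover have "[:of_int p:] \<in> ?B"
        by (simp add: Ints_loc_poly_def)
      ultimately have "C = assoc_class_in ?B [:of_int p:]"
        using a(3) aB by (simp add: assoc_class_in_eq_iff)
      with \<open>p \<in> P\<close> show ?thesis by blast
    next
      fix g assume g: "coeff g 0 = 1" "associated_in ?B a g"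
      then have gB: "g \<in> ?B"
        by (simp add: Ints_loc_poly_def)
      have "g dvd a" "a dvd x"
        using g(2) a(2) by (auto simp: associated_in_def dest: dvd_in_imp_dvd)
      then have "g dvd x" by (rule dvd_trans)
      moreover have "C = assoc_class_in ?B g"
        using a(3) aB gB g(2) by (simp add: assoc_class_in_eq_iff)
      ultimately show ?thesis
        using g(1) by blast
    qed
  qed
  moreover have "finite ((\<lambda>p. assoc_class_in ?B [:of_int p:]) ` P \<union>
      assoc_class_in ?B ` {g. coeff g 0 = 1 \<and> g dvd x})"
    using assms(1) finite_dvd_coeff_0_eq_1[OF assms(3)] by simp
  ultimately show ?thesis
    by (rule finite_subset)
qed

lemma ecard_irreducible_classes_Ints_loc_poly:
  "ecard (assoc_class_in (Ints_loc_poly P) ` {a. irreducible_in (Ints_loc_poly P) a}) = \<infinity>"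
proof -
  let ?B = "Ints_loc_poly P"
  interpret encoded_subring ?B "\<lambda>f. graph_code (coeff f)"
    by (rule encoded_subring_Ints_loc_poly)
  have "inj_on (\<lambda>c. assoc_class_in ?B [:1, c:]) {c. c \<noteq> 0}"
  proof (rule inj_onI)
    fix c d assume cd: "c \<in> {c. c \<noteq> 0}" "d \<in> {c. c \<noteq> 0}"
      "assoc_class_in ?B [:1, c:] = assoc_class_in ?B [:1, d:]"
    then have "associated_in ?B [:1, c:] [:1, d:]"
      using linear_irreducible_in_Ints_loc_poly by (simp add: assoc_class_in_eq_iff irreducible_in_def)
    then have "[:1, c:] dvd [:1, d:]"
      by (auto simp: associated_in_def dest: dvd_in_imp_dvd)
    then have "[:1, c:] = [:1, d:]"
      using cd(1,2) by (intro eq_if_dvd_coeff_0_eq_1) auto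
    then show "c = d" by simp
  qed
  moreover have "infinite {c :: rat. c \<noteq> 0}"
    using infinite_UNIV_char_0 by (simp add: Collect_neg_eq)
  ultimately have "infinite ((\<lambda>c. assoc_class_in ?B [:1, c:]) ` {c. c \<noteq> 0})"
    by (simp add: finite_image_iff)
  moreover have "(\<lambda>c. assoc_class_in ?B [:1, c:]) ` {c. c \<noteq> 0} \<subseteq>
      assoc_class_in ?B ` {a. irreducible_in ?B a}"
    using linear_irreducible_in_Ints_loc_poly by auto
  ultimately show ?thesis
    by (auto simp: ecard_def dest: finite_subset)
qed

lemma exists_nonatomic_IDF_domain_with_infinitely_many_atom_classes:
  assumes "finite P" "P \<noteq> {}"
  shows "\<exists>R :: nat set ring. domain R \<and> \<not> atomic_dom R \<and> IDF_dom R \<and>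
    ecard (atom_classes R) = \<infinity>"
proof -
  let ?B = "Ints_loc_poly P"
  interpret encoded_subring ?B "\<lambda>f. graph_code (coeff f)"
    by (rule encoded_subring_Ints_loc_poly)
  have "\<not> atomic_dom image_ring"
  proof (rule not_atomic_dom_image_ringI[where Q = "\<lambda>f. coeff f 0 \<noteq> 0" and x = "[:0, 1:]"])
    show "[:0, 1:] \<in> ?B"
      by (simp add: Ints_loc_poly_def)
    show "\<not> unit_in ?B [:0, 1:]"
      by (simp add: unit_in_Ints_loc_poly_iff)
  qed (use irreducible_in_Ints_loc_poly_coeff_0[OF assms(2)] in \<open>auto simp: coeff_mult_0\<close>)
  moreover have "IDF_dom image_ring"
    using finite_irreducible_divisor_classes_Ints_loc_poly[OF assms]
    by (rule IDF_dom_image_ringI)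
  moreover have "ecard (atom_classes image_ring) = \<infinity>"
    by (simp add: ecard_atom_classes_image_ring ecard_irreducible_classes_Ints_loc_poly)
  ultimately show ?thesis
    using domain_image_ring by blast
qed

end

lemma infinite_int_primes: "infinite {p :: int. prime p}"
proof -
  have "infinite (int ` {p. prime p})"
    using primes_infinite by (simp add: finite_image_iff)
  moreover have "int ` {p. prime p} \<subseteq> {p :: int. prime p}"
    by auto
  ultimately show ?thesis
    using infinite_super by blast
qed

theorem mainTheorem4:
  fixes l :: enat
  assumes "l \<noteq> 0"
  shows "\<exists>R :: (nat set) ring. domain R \<and> \<not> atomic_dom R \<and> IDF_dom R \<and>
           ecard (atom_classes R) = l"
proof (cases l)
  case (enat n)
  obtain P where P: "P \<subseteq> {p :: int. prime p}" "finite P" "card P = n"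
    using infinite_arbitrarily_large[OF infinite_int_primes] by blast
  with assms enat have "P \<noteq> {}" by (auto simp: zero_enat_def)
  interpret prime_set P
    using P(1) by unfold_locales blast
  show ?thesis
    using exists_nonatomic_IDF_domain_with_card_atom_classes[OF P(2) \<open>P \<noteq> {}\<close>] P(3) enat by simp
next
  case infinity
  interpret prime_set "{2 :: int}"
    by unfold_locales simp
  show ?thesis
    using exists_nonatomic_IDF_domain_with_infinitely_many_atom_classes infinity by simp
qed

end
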